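(* For $i=1,\dots,q$ let $\lambda_i$ be a partition of $k_i$ and let $G_i$ be an $S_{\lambda_i}$-$k_i$-colourable graph. Let $\lambda=\bigcup_{i=1}^q\lambda_i$ be the multiset union and $k=k_1+\dots+k_q$. Then the join $\vee_{i=1}^qG_i$ is $S_\lambda$-$k$-colourable.
   Context: View a graph $G$ as a symmetric digraph: each edge $uv$ gives arcs $e=(u,v)$ and $e^{-1}=(v,u)$. For an inverse-closed set $S$ of permutations, an $S$-signature of $G$ is a map $\sigma$ from arcs to $S$ with $\sigma(e^{-1})=\sigma(e)^{-1}$. A $k$-colouring of $(G,\sigma)$ is a map $f:V(G)\to[k]$ with $\sigma(e)(f(x))\ne f(y)$ for every arc $e=(x,y)$; $G$ is $S$-$k$-colourable if $(G,\sigma)$ is $k$-colourable for every $S$-signature $\sigma$. For a partition $\lambda=\{k_1,\dots,k_q\}$ of $k$ (listed in a fixed order), let $s_0=0$, $s_j=s_{j-1}+k_j$, $I_j=\{s_{j-1}+1,\dots,s_j\}$, and let $S_\lambda$ be the set of permutations $\pi$ of $[k]$ with $\pi(I_j)=I_j$ for all $j$. The join $\vee_{i=1}^qG_i$ is the disjoint union of the $G_i$ plus all edges between $V(G_i)$ and $V(G_j)$ for $i\ne j$. *)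

theory Defs
  imports "HOL-Combinatorics.Permutations"
begin

definition is_partition :: "nat list \<Rightarrow> nat \<Rightarrow> bool" where
  "is_partition lam k \<longleftrightarrow> (\<forall>x\<in>set lam. 0 < x) \<and> sum_list lam = k"

text \<open>Block I_{j+1} = {s_j + 1 .. s_{j+1}} (0-indexed j).\<close>
definition block :: "nat list \<Rightarrow> nat \<Rightarrow> nat set" where
  "block lam j = {sum_list (take j lam) + 1 .. sum_list (take (Suc j) lam)}"

definition S_lambda :: "nat list \<Rightarrow> (nat \<Rightarrow> nat) set" where
  "S_lambda lam = {p. p permutes {1..sum_list lam} \<and>
                      (\<forall>j<length lam. p ` block lam j = block lam j)}"

definition graph :: "'a set \<Rightarrow> ('a \<Rightarrow> 'a \<Rightarrow> bool) \<Rightarrow> bool" where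
  "graph V E \<longleftrightarrow> (\<forall>u v. E u v \<longrightarrow> u \<in> V \<and> v \<in> V) \<and> (\<forall>u v. E u v \<longrightarrow> E v u)
                  \<and> (\<forall>u. \<not> E u u)"

definition signature :: "(nat \<Rightarrow> nat) set \<Rightarrow> ('a \<Rightarrow> 'a \<Rightarrow> bool) \<Rightarrow> ('a \<Rightarrow> 'a \<Rightarrow> nat \<Rightarrow> nat) \<Rightarrow> bool" where
  "signature S E \<sigma> \<longleftrightarrow> (\<forall>u v. E u v \<longrightarrow> \<sigma> u v \<in> S \<and> \<sigma> v u = inv (\<sigma> u v))"

definition colouring :: "nat \<Rightarrow> 'a set \<Rightarrow> ('a \<Rightarrow> 'a \<Rightarrow> bool) \<Rightarrow> ('a \<Rightarrow> 'a \<Rightarrow> nat \<Rightarrow> nat) \<Rightarrow> ('a \<Rightarrow> nat) \<Rightarrow> bool" where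
  "colouring k V E \<sigma> f \<longleftrightarrow> (\<forall>v\<in>V. f v \<in> {1..k}) \<and> (\<forall>x y. E x y \<longrightarrow> \<sigma> x y (f x) \<noteq> f y)"

definition S_k_colourable :: "(nat \<Rightarrow> nat) set \<Rightarrow> nat \<Rightarrow> 'a set \<Rightarrow> ('a \<Rightarrow> 'a \<Rightarrow> bool) \<Rightarrow> bool" where
  "S_k_colourable S k V E \<longleftrightarrow> (\<forall>\<sigma>. signature S E \<sigma> \<longrightarrow> (\<exists>f. colouring k V E \<sigma> f))"

definition join_V :: "nat \<Rightarrow> (nat \<Rightarrow> 'a set) \<Rightarrow> (nat \<times> 'a) set" where
  "join_V q V = {(i, v). i < q \<and> v \<in> V i}"

definition join_E :: "nat \<Rightarrow> (nat \<Rightarrow> 'a set) \<Rightarrow> (nat \<Rightarrow> 'a \<Rightarrow> 'a \<Rightarrow> bool) \<Rightarrow> nat \<times> 'a \<Rightarrow> nat \<times> 'a \<Rightarrow> bool" where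
  "join_E q V E x y \<longleftrightarrow> (case (x, y) of ((i, u), (j, v)) \<Rightarrow>
      i < q \<and> j < q \<and> u \<in> V i \<and> v \<in> V j \<and> (i = j \<longrightarrow> E i u v))"

end

theory Submission
  imports Defs
begin

text \<open>Since lam is a rearrangement of the concatenation of the lams i, each block j of lams i
  can be matched with its own block m i j of lam of the same size. Translating blocks yields
  injections phi i from {1..ks i} into {1..k} whose images are pairwise disjoint unions of blocks
  of lam. Hence every s in S_lambda lam maps each image onto itself, and its pull-back along phi i
  lies in S_lambda (lams i). Given a signature sigma of the join, colour each G_i with respect to
  the pulled-back signature and push the colours forward along phi i: edges inside G_i are then
  respected, and an edge between G_i and G_j is respected because sigma keeps the image of phi i,
  which is disjoint from that of phi j.\<close>

lemma sum_list_take_mono: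
  fixes xs :: "nat list"
  assumes "i \<le> j"
  shows "sum_list (take i xs) \<le> sum_list (take j xs)"
proof -
  have "take j xs = take i xs @ take (j - i) (drop i xs)"
    using assms by (metis le_add_diff_inverse take_add)
  then show ?thesis by simp
qed

lemma sum_list_take_le: "sum_list (take i xs) \<le> sum_list (xs :: nat list)"
  by (metis append_take_drop_id le_add1 sum_list_append)

lemma block_nth:
  "j < length xs \<Longrightarrow> block xs j = {sum_list (take j xs) + 1 .. sum_list (take j xs) + xs ! j}"
  by (simp add: block_def take_Suc_conv_app_nth)

lemma block_subset: "block xs j \<subseteq> {1..sum_list xs}"
  using sum_list_take_le[of "Suc j" xs] by (auto simp: block_def)

lemma disjoint_blocks:
  assumes "j \<noteq> j'"
  shows "block xs j \<inter> block xs j' = {}"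
proof -
  have "block xs j \<inter> block xs j' = {}" if "j < j'" for j j'
    using sum_list_take_mono[of "Suc j" j' xs] that by (auto simp: block_def)
  then show ?thesis
    using assms by (metis inf_commute linorder_neqE_nat)
qed

lemma block_Cons_0: "block (x # xs) 0 = {1..x}"
  by (simp add: block_def)

lemma block_Cons_Suc: "block (x # xs) (Suc j) = (\<lambda>c. c + x) ` block xs j"
  by (simp add: block_def add.commute)

lemma Union_blocks: "(\<Union>j<length xs. block xs j) = {1..sum_list xs}"
proof (induction xs)
  case (Cons x xs)
  have "(\<Union>j<length (x # xs). block (x # xs) j) = {1..x} \<union> (\<lambda>c. c + x) ` {1..sum_list xs}"
    unfolding lessThan_Suc_eq_insert_0 length_Cons
    by (simp add: block_Cons_0 block_Cons_Suc Cons.IH flip: image_UN)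
  also have "\<dots> = {1..sum_list (x # xs)}"
    by auto
  finally show ?case .
qed simp

definition block_index :: "nat list \<Rightarrow> nat \<Rightarrow> nat" where
  "block_index xs c = (THE j. j < length xs \<and> c \<in> block xs j)"

lemma block_index_eq: "j < length xs \<Longrightarrow> c \<in> block xs j \<Longrightarrow> block_index xs c = j"
  unfolding block_index_def using disjoint_blocks by (intro the_equality) blast+

text \<open>Translates each block j of xs onto the block m j of lam (meant to be of the same size).\<close>
definition block_transfer :: "nat list \<Rightarrow> nat list \<Rightarrow> (nat \<Rightarrow> nat) \<Rightarrow> nat \<Rightarrow> nat" where
  "block_transfer xs lam m c =
     sum_list (take (m (block_index xs c)) lam) + (c - sum_list (take (block_index xs c) xs))"

lemma bij_betw_block_transfer:
  assumes "j < length xs" "m j < length lam" "lam ! m j = xs ! j"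
  shows "bij_betw (block_transfer xs lam m) (block xs j) (block lam (m j))"
proof -
  define T where "T = sum_list (take j xs)"
  define T' where "T' = sum_list (take (m j) lam)"
  have translation: "\<And>c. c \<in> block xs j \<Longrightarrow> block_transfer xs lam m c = T' + (c - T)"
    using block_index_eq[OF assms(1)] by (simp add: block_transfer_def T_def T'_def)
  have "block xs j = {T + 1..T + xs ! j}" "block lam (m j) = {T' + 1..T' + xs ! j}"
    using block_nth[OF assms(1)] block_nth[OF assms(2)] assms(3) by (simp_all add: T_def T'_def)
  then have "bij_betw (\<lambda>c. T' + (c - T)) (block xs j) (block lam (m j))"
    by (auto intro!: bij_betw_byWitness[where f' = "\<lambda>d. T + (d - T')"])
  then show ?thesis
    by (simp only: bij_betw_cong[OF translation])
qed

lemma inj_on_UN_disjoint_images: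
  assumes "\<And>i. i \<in> I \<Longrightarrow> inj_on f (A i)"
    and "\<And>i i'. i \<in> I \<Longrightarrow> i' \<in> I \<Longrightarrow> i \<noteq> i' \<Longrightarrow> f ` A i \<inter> f ` A i' = {}"
  shows "inj_on f (\<Union>i\<in>I. A i)"
  using assms unfolding inj_on_def by blast

lemma block_transfer_embedding:
  assumes "inj_on m {..<length xs}"
    and "\<And>j. j < length xs \<Longrightarrow> m j < length lam \<and> lam ! m j = xs ! j"
  shows "inj_on (block_transfer xs lam m) {1..sum_list xs}"
    and "block_transfer xs lam m ` {1..sum_list xs} = (\<Union>j<length xs. block lam (m j))"
proof -
  have bij: "bij_betw (block_transfer xs lam m) (block xs j) (block lam (m j))"
    if "j < length xs" for j
    using bij_betw_block_transfer[OF that] assms(2)[OF that] by blast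
  show "block_transfer xs lam m ` {1..sum_list xs} = (\<Union>j<length xs. block lam (m j))"
    unfolding Union_blocks[symmetric] image_UN using bij by (simp add: bij_betw_def)
  show "inj_on (block_transfer xs lam m) {1..sum_list xs}"
    unfolding Union_blocks[symmetric]
  proof (rule inj_on_UN_disjoint_images)
    show "inj_on (block_transfer xs lam m) (block xs j)" if "j \<in> {..<length xs}" for j
      using bij that by (simp add: bij_betw_def)
    show "block_transfer xs lam m ` block xs j \<inter> block_transfer xs lam m ` block xs j' = {}"
      if "j \<in> {..<length xs}" "j' \<in> {..<length xs}" "j \<noteq> j'" for j j'
      using bij[of j] bij[of j'] that disjoint_blocks[of "m j" "m j'"] assms(1)
      by (simp add: bij_betw_def inj_on_eq_iff)
  qed
qed

definition conjugate_on :: "'a set \<Rightarrow> ('a \<Rightarrow> 'b) \<Rightarrow> ('b \<Rightarrow> 'b) \<Rightarrow> 'a \<Rightarrow> 'a" where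
  "conjugate_on A f s c = (if c \<in> A then inv_into A f (s (f c)) else c)"

lemma conjugate_on_id: "inj_on f A \<Longrightarrow> conjugate_on A f id = id"
  by (auto simp: conjugate_on_def)

lemma conjugate_on_comp:
  assumes "inj_on f A" "s ` f ` A \<subseteq> f ` A"
  shows "conjugate_on A f (t \<circ> s) = conjugate_on A f t \<circ> conjugate_on A f s"
proof
  fix c
  show "conjugate_on A f (t \<circ> s) c = (conjugate_on A f t \<circ> conjugate_on A f s) c"
  proof (cases "c \<in> A")
    case True
    then have "s (f c) \<in> f ` A" using assms(2) by blast
    then show ?thesis
      using True by (simp add: conjugate_on_def inv_into_into f_inv_into_f)
  qed (simp add: conjugate_on_def)
qed

lemma conjugate_on_in: "c \<in> A \<Longrightarrow> s (f c) \<in> f ` A \<Longrightarrow> conjugate_on A f s c \<in> A"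
  by (simp add: conjugate_on_def inv_into_into)

lemma f_conjugate_on: "c \<in> A \<Longrightarrow> s (f c) \<in> f ` A \<Longrightarrow> f (conjugate_on A f s c) = s (f c)"
  by (simp add: conjugate_on_def f_inv_into_f)

lemma image_conjugate_on:
  assumes "inj_on f A" "B \<subseteq> A" "s ` f ` B = f ` B"
  shows "conjugate_on A f s ` B = B"
proof -
  have "conjugate_on A f s ` B = inv_into A f ` s ` f ` B"
    using assms(2) by (force simp: conjugate_on_def)
  also have "\<dots> = B"
    using assms by simp
  finally show ?thesis .
qed

lemma
  assumes "inj_on f A" "bij s" "s ` f ` A = f ` A"
  shows conjugate_on_permutes: "conjugate_on A f s permutes A"
    and inv_conjugate_on: "inv (conjugate_on A f s) = conjugate_on A f (inv s)"
proof -
  have inv_s: "inv s ` f ` A = f ` A"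
    using assms(2,3) by (metis bij_is_inj image_inv_f_f)
  have left: "conjugate_on A f (inv s) \<circ> conjugate_on A f s = id"
    using assms(1,3) by (simp flip: conjugate_on_comp add: bij_is_inj[OF assms(2)] conjugate_on_id)
  have right: "conjugate_on A f s \<circ> conjugate_on A f (inv s) = id"
    using assms(1) inv_s by (simp flip: conjugate_on_comp add: bij_is_surj[OF assms(2), unfolded surj_iff] conjugate_on_id)
  show "inv (conjugate_on A f s) = conjugate_on A f (inv s)"
    using right left by (rule inv_unique_comp)
  have "bij_betw (conjugate_on A f s) A A"
    using left right image_conjugate_on[OF assms(1) order_refl] assms(3) inv_s
    by (intro bij_betw_byWitness[where f' = "conjugate_on A f (inv s)"]) (auto simp: fun_eq_iff)
  then show "conjugate_on A f s permutes A"
    by (rule bij_imp_permutes) (simp add: conjugate_on_def)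
qed

definition colour_embedding ::
    "(nat \<Rightarrow> nat) set \<Rightarrow> (nat \<Rightarrow> nat) set \<Rightarrow> nat \<Rightarrow> nat \<Rightarrow> (nat \<Rightarrow> nat) \<Rightarrow> bool" where
  "colour_embedding S' S k' k \<phi> \<longleftrightarrow>
     inj_on \<phi> {1..k'} \<and> \<phi> ` {1..k'} \<subseteq> {1..k} \<and>
     (\<forall>s\<in>S. s ` \<phi> ` {1..k'} = \<phi> ` {1..k'} \<and> conjugate_on {1..k'} \<phi> s \<in> S')"

lemma join_S_k_colourable:
  fixes \<phi> :: "nat \<Rightarrow> nat \<Rightarrow> nat"
  assumes graphs: "\<And>i. i < q \<Longrightarrow> graph (V i) (E i)"
    and colourable: "\<And>i. i < q \<Longrightarrow> S_k_colourable (Ss i) (ks i) (V i) (E i)"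
    and embedding: "\<And>i. i < q \<Longrightarrow> colour_embedding (Ss i) S (ks i) k (\<phi> i)"
    and disjoint: "\<And>i i'. i < q \<Longrightarrow> i' < q \<Longrightarrow> i \<noteq> i' \<Longrightarrow>
                     \<phi> i ` {1..ks i} \<inter> \<phi> i' ` {1..ks i'} = {}"
    and bij: "\<And>s. s \<in> S \<Longrightarrow> bij s"
  shows "S_k_colourable S k (join_V q V) (join_E q V E)"
proof -
  have inj: "\<And>i. i < q \<Longrightarrow> inj_on (\<phi> i) {1..ks i}"
    and range: "\<And>i. i < q \<Longrightarrow> \<phi> i ` {1..ks i} \<subseteq> {1..k}"
    and invariant: "\<And>s i. s \<in> S \<Longrightarrow> i < q \<Longrightarrow> s ` \<phi> i ` {1..ks i} = \<phi> i ` {1..ks i}"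
    and conjugate: "\<And>s i. s \<in> S \<Longrightarrow> i < q \<Longrightarrow> conjugate_on {1..ks i} (\<phi> i) s \<in> Ss i"
    using embedding by (simp_all add: colour_embedding_def)
  show ?thesis
    unfolding S_k_colourable_def
  proof (intro allI impI)
    fix \<sigma> assume \<sigma>: "signature S (join_E q V E) \<sigma>"
    define \<tau> where "\<tau> i u v = conjugate_on {1..ks i} (\<phi> i) (\<sigma> (i, u) (i, v))" for i u v
    have join_edge: "join_E q V E (i, u) (i, v)" if "i < q" "E i u v" for i u v
      using graphs[OF that(1)] that by (auto simp: graph_def join_E_def)
    have "signature (Ss i) (E i) (\<tau> i)" if i: "i < q" for i
      unfolding signature_def
    proof (intro allI impI)
      fix u v assume "E i u v"
      then have "\<sigma> (i, u) (i, v) \<in> S" "\<sigma> (i, v) (i, u) = inv (\<sigma> (i, u) (i, v))"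
        using \<sigma> join_edge[OF i] by (auto simp: signature_def)
      then show "\<tau> i u v \<in> Ss i \<and> \<tau> i v u = inv (\<tau> i u v)"
        using conjugate i inv_conjugate_on[OF inj bij invariant] by (simp add: \<tau>_def)
    qed
    then have "\<forall>i. \<exists>g. i < q \<longrightarrow> colouring (ks i) (V i) (E i) (\<tau> i) g"
      using colourable by (auto simp: S_k_colourable_def)
    then obtain g where g: "\<And>i. i < q \<Longrightarrow> colouring (ks i) (V i) (E i) (\<tau> i) (g i)"
      by metis
    define f where "f = (\<lambda>(i, v). \<phi> i (g i v))"
    have f_in: "f (i, v) \<in> \<phi> i ` {1..ks i}" if "i < q" "v \<in> V i" for i v
      using g[OF that(1)] that(2) by (auto simp: f_def colouring_def)
    have "\<sigma> x y (f x) \<noteq> f y" if xy: "join_E q V E x y" for x y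
    proof -
      obtain i u j v where x: "x = (i, u)" and y: "y = (j, v)"
        by fastforce
      have ij: "i < q" "j < q" "u \<in> V i" "v \<in> V j" "i = j \<Longrightarrow> E i u v"
        using xy by (simp_all add: x y join_E_def)
      have "\<sigma> x y \<in> S"
        using \<sigma> xy unfolding signature_def by blast
      show ?thesis
      proof (cases "i = j")
        case False
        have "\<sigma> x y (f x) \<in> \<phi> i ` {1..ks i}"
          using f_in[OF ij(1,3)] invariant[OF \<open>\<sigma> x y \<in> S\<close> ij(1)] by (auto simp: x)
        then show ?thesis
          using f_in[OF ij(2,4)] disjoint[OF ij(1,2) False] unfolding y by (metis IntI empty_iff)
      next
        case True
        have gu: "g i u \<in> {1..ks i}" and gv: "g i v \<in> {1..ks i}"
          using g[OF ij(1)] ij(3,4) True by (auto simp: colouring_def)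
        have \<sigma>_in: "\<sigma> (i, u) (i, v) (\<phi> i (g i u)) \<in> \<phi> i ` {1..ks i}"
          using invariant[OF \<open>\<sigma> x y \<in> S\<close> ij(1)] gu True x y by blast
        then have "\<sigma> x y (f x) = \<phi> i (\<tau> i u v (g i u))"
          unfolding \<tau>_def using gu True x y by (simp add: f_def f_conjugate_on)
        moreover have "\<tau> i u v (g i u) \<in> {1..ks i}"
          unfolding \<tau>_def using gu \<sigma>_in by (rule conjugate_on_in)
        moreover have "\<tau> i u v (g i u) \<noteq> g i v"
          using g[OF ij(1)] ij(5) True by (simp add: colouring_def)
        ultimately show ?thesis
          using inj[OF ij(1)] gv True by (simp add: y f_def inj_on_eq_iff)
      qed
    qed
    moreover have "f x \<in> {1..k}" if "x \<in> join_V q V" for x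
      using that f_in range by (fastforce simp: join_V_def)
    ultimately show "\<exists>f. colouring k (join_V q V) (join_E q V E) \<sigma> f"
      unfolding colouring_def by blast
  qed
qed

lemma length_concat_map_upt: "length (concat (map xss [0..<i])) = (\<Sum>l<i. length (xss l))"
  by (simp add: length_concat interv_sum_list_conv_sum_set_nat atLeast0LessThan)

lemma nth_concat_map_upt:
  assumes "i < q" "j < length (xss i)"
  shows "(\<Sum>l<i. length (xss l)) + j < length (concat (map xss [0..<q]))"
    and "concat (map xss [0..<q]) ! ((\<Sum>l<i. length (xss l)) + j) = xss i ! j"
proof -
  have "[0..<q] = [0..<i] @ i # [Suc i..<q]"
    using assms(1) by (metis upt_add_eq_append upt_conv_Cons le_add_diff_inverse less_imp_le_nat zero_le)
  then have "concat (map xss [0..<q]) = concat (map xss [0..<i]) @ xss i @ concat (map xss [Suc i..<q])"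
    by simp
  then show "(\<Sum>l<i. length (xss l)) + j < length (concat (map xss [0..<q]))"
    and "concat (map xss [0..<q]) ! ((\<Sum>l<i. length (xss l)) + j) = xss i ! j"
    using assms(2) by (simp_all add: nth_append flip: length_concat_map_upt)
qed

lemma inj_on_concat_index:
  fixes xss :: "nat \<Rightarrow> 'a list"
  shows "inj_on (\<lambda>(i, j). (\<Sum>l<i. length (xss l)) + j) (SIGMA i:UNIV. {..<length (xss i)})"
proof -
  have less: "(\<Sum>l<i. length (xss l)) + j < (\<Sum>l<i'. length (xss l)) + j'"
    if "i < i'" "j < length (xss i)" for i i' j j'
  proof -
    have "(\<Sum>l<Suc i. length (xss l)) \<le> (\<Sum>l<i'. length (xss l))"
      using that(1) by (intro sum_mono2) auto
    then show ?thesis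
      using that(2) by simp
  qed
  show ?thesis
  proof (intro inj_onI, clarsimp)
    fix i j i' j'
    assume "j < length (xss i)" "j' < length (xss i')"
      and eq: "(\<Sum>l<i. length (xss l)) + j = (\<Sum>l<i'. length (xss l)) + j'"
    with less have "i = i'"
      by (metis linorder_neqE_nat less_irrefl)
    with eq show "i = i' \<and> j = j'"
      by simp
  qed
qed

lemma mset_eq_nth_embedding:
  assumes "mset ys = mset xs"
  obtains m where "inj_on m {..<length ys}"
    and "\<And>j. j < length ys \<Longrightarrow> m j < length xs \<and> xs ! m j = ys ! j"
proof -
  obtain p where p: "p permutes {..<length xs}" "permute_list p xs = ys"
    using mset_eq_permutation[OF assms] by blast
  have "length ys = length xs"
    using p(2) by auto
  then show ?thesis
    using p permute_list_nth[OF p(1)] permutes_in_image[OF p(1)]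
    by (intro that[of p]) (auto intro: permutes_inj_on[OF p(1)])
qed

lemma mset_sum_nth_embedding:
  fixes lams :: "nat \<Rightarrow> 'a list"
  assumes "mset lam = (\<Sum>i<q. mset (lams i))"
  obtains m where "inj_on (\<lambda>(i, j). m i j) (SIGMA i:{..<q}. {..<length (lams i)})"
    and "\<And>i j. i < q \<Longrightarrow> j < length (lams i) \<Longrightarrow> m i j < length lam \<and> lam ! m i j = lams i ! j"
proof -
  define L where "L = concat (map lams [0..<q])"
  have "mset L = mset lam"
    unfolding L_def assms mset_concat
    by (simp add: interv_sum_list_conv_sum_set_nat atLeast0LessThan)
  then obtain p where p: "inj_on p {..<length L}"
    "\<And>n. n < length L \<Longrightarrow> p n < length lam \<and> lam ! p n = L ! n"
    using mset_eq_nth_embedding by blast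
  define m where "m i j = p ((\<Sum>l<i. length (lams l)) + j)" for i j
  have "inj_on (\<lambda>(i, j). m i j) (SIGMA i:{..<q}. {..<length (lams i)})"
    unfolding m_def
    using inj_on_concat_index[of lams] p(1) nth_concat_map_upt(1)[where q = q and xss = lams, folded L_def]
    by (auto simp: inj_on_def)
  moreover have "m i j < length lam \<and> lam ! m i j = lams i ! j" if "i < q" "j < length (lams i)" for i j
    using p(2) nth_concat_map_upt[where xss = lams, OF that, folded L_def] by (simp add: m_def)
  ultimately show ?thesis
    by (rule that)
qed

context
  fixes xs lam :: "nat list" and m :: "nat \<Rightarrow> nat"
  assumes m_inj: "inj_on m {..<length xs}"
    and m_nth: "\<And>j. j < length xs \<Longrightarrow> m j < length lam \<and> lam ! m j = xs ! j"
begin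

lemma S_lambda_block_transfer_image:
  assumes "s \<in> S_lambda lam"
  shows "s ` block_transfer xs lam m ` {1..sum_list xs} = block_transfer xs lam m ` {1..sum_list xs}"
proof -
  have "s ` block lam (m j) = block lam (m j)" if "j < length xs" for j
    using assms m_nth[OF that] by (simp add: S_lambda_def)
  moreover have "block_transfer xs lam m ` {1..sum_list xs} = (\<Union>j<length xs. block lam (m j))"
    by (rule block_transfer_embedding(2)[OF m_inj m_nth])
  ultimately show ?thesis
    by (simp add: image_UN)
qed

lemma conjugate_block_transfer_in_S_lambda:
  assumes s: "s \<in> S_lambda lam"
  shows "conjugate_on {1..sum_list xs} (block_transfer xs lam m) s \<in> S_lambda xs"
proof -
  note inj = block_transfer_embedding(1)[OF m_inj m_nth]
  have "bij s"
    using s by (auto simp: S_lambda_def permutes_bij)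
  have "conjugate_on {1..sum_list xs} (block_transfer xs lam m) s ` block xs j = block xs j"
    if "j < length xs" for j
  proof (rule image_conjugate_on[OF inj block_subset])
    have "block_transfer xs lam m ` block xs j = block lam (m j)"
      using bij_betw_block_transfer[OF that] m_nth[OF that] by (simp add: bij_betw_def)
    then show "s ` block_transfer xs lam m ` block xs j = block_transfer xs lam m ` block xs j"
      using s m_nth[OF that] by (simp add: S_lambda_def)
  qed
  then show ?thesis
    using conjugate_on_permutes[OF inj \<open>bij s\<close> S_lambda_block_transfer_image[OF s]]
    by (simp add: S_lambda_def)
qed

end

lemma sum_list_eq_sum_parts:
  fixes q :: nat
  assumes "mset lam = (\<Sum>i<q. mset (lams i))"
  shows "sum_list lam = (\<Sum>i<q. sum_list (lams i))"
proof -
  have "sum_mset (\<Sum>i<q. mset (lams i)) = (\<Sum>i<q. sum_list (lams i))"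
    by (induction q) (simp_all add: sum_mset_sum_list)
  then show ?thesis
    using arg_cong[OF assms, of sum_mset] by (simp add: sum_mset_sum_list)
qed

lemma S_lambda_parts_embedding:
  fixes lams :: "nat \<Rightarrow> nat list"
  assumes "mset lam = (\<Sum>i<q. mset (lams i))"
  obtains \<phi> where "\<And>i. i < q \<Longrightarrow>
      colour_embedding (S_lambda (lams i)) (S_lambda lam) (sum_list (lams i)) (sum_list lam) (\<phi> i)"
    and "\<And>i i'. i < q \<Longrightarrow> i' < q \<Longrightarrow> i \<noteq> i' \<Longrightarrow>
      \<phi> i ` {1..sum_list (lams i)} \<inter> \<phi> i' ` {1..sum_list (lams i')} = {}"
proof -
  obtain m where m_inj: "inj_on (\<lambda>(i, j). m i j) (SIGMA i:{..<q}. {..<length (lams i)})"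
    and m_nth: "\<And>i j. i < q \<Longrightarrow> j < length (lams i) \<Longrightarrow> m i j < length lam \<and> lam ! m i j = lams i ! j"
    using mset_sum_nth_embedding[OF assms] by blast
  have m_inj_i: "inj_on (m i) {..<length (lams i)}" if "i < q" for i
    using m_inj that by (auto simp: inj_on_def)
  define \<phi> where "\<phi> i = block_transfer (lams i) lam (m i)" for i
  have image: "\<phi> i ` {1..sum_list (lams i)} = (\<Union>j<length (lams i). block lam (m i j))"
    if "i < q" for i
    unfolding \<phi>_def by (rule block_transfer_embedding(2)[OF m_inj_i[OF that] m_nth[OF that]])
  show ?thesis
  proof (rule that[of \<phi>])
    show "colour_embedding (S_lambda (lams i)) (S_lambda lam) (sum_list (lams i)) (sum_list lam) (\<phi> i)"
      if "i < q" for i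
    proof -
      have "\<phi> i ` {1..sum_list (lams i)} \<subseteq> {1..sum_list lam}"
        unfolding image[OF that] using block_subset by (rule UN_least)
      then show ?thesis
        unfolding colour_embedding_def
        using block_transfer_embedding(1)[OF m_inj_i[OF that] m_nth[OF that]]
          S_lambda_block_transfer_image[OF m_inj_i[OF that] m_nth[OF that]]
          conjugate_block_transfer_in_S_lambda[OF m_inj_i[OF that] m_nth[OF that]]
        by (simp add: \<phi>_def)
    qed
    have "block lam (m i j) \<inter> block lam (m i' j') = {}"
      if "i < q" "i' < q" "i \<noteq> i'" "j < length (lams i)" "j' < length (lams i')" for i i' j j'
      using m_inj that by (intro disjoint_blocks) (auto simp: inj_on_def)
    then show "\<phi> i ` {1..sum_list (lams i)} \<inter> \<phi> i' ` {1..sum_list (lams i')} = {}"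
      if "i < q" "i' < q" "i \<noteq> i'" for i i'
      unfolding image[OF that(1)] image[OF that(2)] using that by blast
  qed
qed

theorem lemma16:
  fixes q :: nat and ks :: "nat \<Rightarrow> nat" and lams :: "nat \<Rightarrow> nat list"
    and V :: "nat \<Rightarrow> 'a set" and E :: "nat \<Rightarrow> 'a \<Rightarrow> 'a \<Rightarrow> bool" and lam :: "nat list"
  assumes "\<forall>i<q. is_partition (lams i) (ks i)"
    and "\<forall>i<q. graph (V i) (E i)"
    and "\<forall>i<q. S_k_colourable (S_lambda (lams i)) (ks i) (V i) (E i)"
    and "mset lam = (\<Sum>i<q. mset (lams i))"
  shows "S_k_colourable (S_lambda lam) (\<Sum>i<q. ks i) (join_V q V) (join_E q V E)"
proof -
  have ks: "ks i = sum_list (lams i)" if "i < q" for i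
    using assms(1) that by (simp add: is_partition_def)
  then have k: "(\<Sum>i<q. ks i) = sum_list lam"
    using sum_list_eq_sum_parts[OF assms(4)] by simp
  have graphs: "\<And>i. i < q \<Longrightarrow> graph (V i) (E i)"
    and colourable: "\<And>i. i < q \<Longrightarrow> S_k_colourable (S_lambda (lams i)) (sum_list (lams i)) (V i) (E i)"
    using assms(2,3) ks by simp_all
  obtain \<phi> where embedding:
    "\<And>i. i < q \<Longrightarrow>
       colour_embedding (S_lambda (lams i)) (S_lambda lam) (sum_list (lams i)) (sum_list lam) (\<phi> i)"
    and disjoint: "\<And>i i'. i < q \<Longrightarrow> i' < q \<Longrightarrow> i \<noteq> i' \<Longrightarrow>
       \<phi> i ` {1..sum_list (lams i)} \<inter> \<phi> i' ` {1..sum_list (lams i')} = {}"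
    using S_lambda_parts_embedding[OF assms(4)] by blast
  have bij: "\<And>s. s \<in> S_lambda lam \<Longrightarrow> bij s"
    by (auto simp: S_lambda_def permutes_bij)
  show ?thesis
    unfolding k by (rule join_S_k_colourable[OF graphs colourable embedding disjoint bij])
qed

end
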